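(* Let $k\ge 2$ and let $G$ be a group that is the free product of the cyclic groups generated by $\tau,\sigma_1,\dots,\sigma_{k-1}$, where the order of $\tau$ is infinite or divisible by $3$ and the order of each $\sigma_i$ is infinite or divisible by $2$. Let $(X,m)$ be a probability space on which $G$ acts by $m$-preserving transformations, freely on a set of full measure. Consider colourings $c:X\to\{A_1,A_2,A_3\}$ (indices taken modulo $3$) and the following rule at a point $x$: let $i$ be such that $c(\tau^{-1}x)=A_i$. If $c(\tau x)\in\{A_i,A_{i+1}\}$, then $x$ must be coloured $A_{i+1}$. If $c(\tau x)=A_{i-1}$, let $n$ be the number of points among $\tau x,\tau^{-1}x,\sigma_1x,\dots,\sigma_{k-1}x$ coloured $A_1$; if $0<n<k$ then $x$ must be coloured $c(\tau x)$, and otherwise $x$ must be coloured $A_{i+1}$. Then this colouring rule is paradoxical.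
   Context: A colouring satisfies the rule if the rule holds at $m$-almost every $x$. The rule is paradoxical if (a) some colouring of $X$ (not necessarily measurable) satisfies it, and (b) there is no pair $(\mu,c)$ where $\mu$ is a finitely additive $G$-invariant probability measure defined on a $G$-invariant algebra $\mathcal{B}$ of subsets of $X$ containing all $m$-measurable sets and extending $m$, and $c$ is a colouring satisfying the rule with $c^{-1}(A_j)\in\mathcal{B}$ for $j=1,2,3$. *)

theory Defs
  imports "HOL-Probability.Probability_Measure" "HOL-Algebra.Group_Action"
    "HOL-Algebra.Multiplicative_Group" "HOL-Algebra.Generated_Groups"
begin

datatype colour = A1 | A2 | A3

fun nxt :: "colour \<Rightarrow> colour" where
  "nxt A1 = A2" | "nxt A2 = A3" | "nxt A3 = A1"

fun prv :: "colour \<Rightarrow> colour" where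
  "prv A1 = A3" | "prv A2 = A1" | "prv A3 = A2"

text \<open>G is the (internal) free product of the cyclic subgroups generated by
  gen 0, ..., gen (k-1): these generate G, and every nonempty reduced word
  (consecutive factors from different cyclic subgroups, each factor
  nontrivial) represents a nontrivial element.\<close>
definition free_product_of_cyclics ::
    "('g, 'b) monoid_scheme \<Rightarrow> (nat \<Rightarrow> 'g) \<Rightarrow> nat \<Rightarrow> bool" where
  "free_product_of_cyclics G gen k \<longleftrightarrow>
     (\<forall>i<k. gen i \<in> carrier G) \<and>
     generate G (gen ` {..<k}) = carrier G \<and>
     (\<forall>ws :: (nat \<times> int) list.
        ws \<noteq> [] \<and> (\<forall>(i, e) \<in> set ws. i < k \<and> gen i [^]\<^bsub>G\<^esub> e \<noteq> \<one>\<^bsub>G\<^esub>) \<and>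
        successively (\<lambda>a b. fst a \<noteq> fst b) ws \<longrightarrow>
        foldr (\<lambda>(i, e) acc. gen i [^]\<^bsub>G\<^esub> e \<otimes>\<^bsub>G\<^esub> acc) ws \<one>\<^bsub>G\<^esub> \<noteq> \<one>\<^bsub>G\<^esub>)"

definition rule_at ::
    "('g, 'b) monoid_scheme \<Rightarrow> ('g \<Rightarrow> 'x \<Rightarrow> 'x) \<Rightarrow> 'g \<Rightarrow> (nat \<Rightarrow> 'g) \<Rightarrow> nat
     \<Rightarrow> ('x \<Rightarrow> colour) \<Rightarrow> 'x \<Rightarrow> bool" where
  "rule_at G \<phi> tau sg k c x \<longleftrightarrow>
     (let a = c (\<phi> (inv\<^bsub>G\<^esub> tau) x);
          b = c (\<phi> tau x);
          n = (if b = A1 then 1 else 0) + (if a = A1 then 1 else 0)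
              + card {i \<in> {1..<k}. c (\<phi> (sg i) x) = A1}
      in (b = a \<or> b = nxt a \<longrightarrow> c x = nxt a) \<and>
         (b = prv a \<longrightarrow> (if 0 < n \<and> n < k then c x = b else c x = nxt a)))"

definition satisfies_rule ::
    "'x measure \<Rightarrow> ('g, 'b) monoid_scheme \<Rightarrow> ('g \<Rightarrow> 'x \<Rightarrow> 'x) \<Rightarrow> 'g \<Rightarrow> (nat \<Rightarrow> 'g)
     \<Rightarrow> nat \<Rightarrow> ('x \<Rightarrow> colour) \<Rightarrow> bool" where
  "satisfies_rule m G \<phi> tau sg k c \<longleftrightarrow> (AE x in m. rule_at G \<phi> tau sg k c x)"

definition invariant_extension ::
    "'x measure \<Rightarrow> ('g, 'b) monoid_scheme \<Rightarrow> ('g \<Rightarrow> 'x \<Rightarrow> 'x) \<Rightarrow> 'x set set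
     \<Rightarrow> ('x set \<Rightarrow> ennreal) \<Rightarrow> bool" where
  "invariant_extension m G \<phi> B \<mu> \<longleftrightarrow>
     Sigma_Algebra.algebra (space m) B \<and> sets m \<subseteq> B \<and>
     positive B \<mu> \<and> additive B \<mu> \<and> \<mu> (space m) = 1 \<and>
     (\<forall>A \<in> sets m. \<mu> A = emeasure m A) \<and>
     (\<forall>g \<in> carrier G. \<forall>A \<in> B. \<phi> g ` A \<in> B \<and> \<mu> (\<phi> g ` A) = \<mu> A)"

definition paradoxical_rule ::
    "'x measure \<Rightarrow> ('g, 'b) monoid_scheme \<Rightarrow> ('g \<Rightarrow> 'x \<Rightarrow> 'x) \<Rightarrow> 'g \<Rightarrow> (nat \<Rightarrow> 'g)
     \<Rightarrow> nat \<Rightarrow> bool" where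
  "paradoxical_rule m G \<phi> tau sg k \<longleftrightarrow>
     (\<exists>c. satisfies_rule m G \<phi> tau sg k c) \<and>
     \<not> (\<exists>B \<mu> c. invariant_extension m G \<phi> B \<mu> \<and>
                satisfies_rule m G \<phi> tau sg k c \<and>
                (\<forall>j. c -` {j} \<inter> space m \<in> B))"

end

theory Submission
  imports Defs
begin

(* Write C_j for the set of points coloured A_j. On the free part of the action, a colouring
   obeying the rule everywhere is obtained by transporting a colouring f of G along the orbits,
   where f(tau g) = f(g) + 1 and f(sigma_i g) = A1 exactly when f(g) is not A1. Such an f is read
   off the normal form of g in the free product, and it is well defined because only the
   exponents of tau modulo 3 and of sigma_i modulo 2 enter it.
   Conversely, the rule forces c(tau x) = c(x) + 1 almost everywhere, so tau^-1 maps C_j into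
   C_(j-1) up to a null set, and sigma_1 maps C_2 and C_3 into C_1. For an invariant finitely
   additive extension mu in which the C_j are measurable, the first fact gives mu(C_j) = 1/3 for
   every j and the second gives 2/3 <= 1/3. *)

lemma nxt_prv [simp]: "nxt (prv c) = c" "prv (nxt c) = c"
  by (cases c; simp)+

locale cyclic_free_product = group G for G (structure) +
  fixes gen :: "nat \<Rightarrow> 'a" and k :: nat
  assumes free_product: "free_product_of_cyclics G gen k"
begin

lemma gen_closed: "i < k \<Longrightarrow> gen i \<in> carrier G"
  using free_product unfolding free_product_of_cyclics_def by blast

lemma generate_gens: "generate G (gen ` {..<k}) = carrier G"
  using free_product unfolding free_product_of_cyclics_def by blast

definition word_eval :: "(nat \<times> int) list \<Rightarrow> 'a" where
  "word_eval w = foldr (\<lambda>(i, e) acc. gen i [^] e \<otimes> acc) w \<one>"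

definition valid_word :: "(nat \<times> int) list \<Rightarrow> bool" where
  "valid_word w \<longleftrightarrow> (\<forall>(i, e) \<in> set w. i < k)"

definition reduced :: "(nat \<times> int) list \<Rightarrow> bool" where
  "reduced w \<longleftrightarrow> (\<forall>(i, e) \<in> set w. i < k \<and> gen i [^] e \<noteq> \<one>) \<and>
     successively (\<lambda>a b. fst a \<noteq> fst b) w"

definition syllables :: "(nat \<times> int) list \<Rightarrow> (nat \<times> 'a) list" where
  "syllables w = map (\<lambda>(i, e). (i, gen i [^] e)) w"

definition inv_word :: "(nat \<times> int) list \<Rightarrow> (nat \<times> int) list" where
  "inv_word w = rev (map (\<lambda>(i, e). (i, - e)) w)"

lemma word_eval_Nil [simp]: "word_eval [] = \<one>"
  by (simp add: word_eval_def)

lemma word_eval_Cons [simp]: "word_eval ((i, e) # w) = gen i [^] e \<otimes> word_eval w"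
  by (simp add: word_eval_def)

lemma reduced_word_eval_neq_one: "reduced w \<Longrightarrow> w \<noteq> [] \<Longrightarrow> word_eval w \<noteq> \<one>"
  using free_product unfolding free_product_of_cyclics_def reduced_def word_eval_def by blast

lemma valid_word_simps [simp]:
  "valid_word []" "valid_word ((i, e) # w) \<longleftrightarrow> i < k \<and> valid_word w"
  by (simp_all add: valid_word_def)

lemma reduced_imp_valid_word: "reduced w \<Longrightarrow> valid_word w"
  by (auto simp: reduced_def valid_word_def)

lemma word_eval_closed [simp]: "valid_word w \<Longrightarrow> word_eval w \<in> carrier G"
  by (induction w) (auto simp: gen_closed)

lemma word_eval_append:
  "valid_word u \<Longrightarrow> valid_word v \<Longrightarrow> word_eval (u @ v) = word_eval u \<otimes> word_eval v"
  by (induction u) (auto simp: m_assoc gen_closed)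

lemma valid_inv_word: "valid_word w \<Longrightarrow> valid_word (inv_word w)"
  by (auto simp: valid_word_def inv_word_def)

lemma word_eval_inv_word: "valid_word w \<Longrightarrow> word_eval (inv_word w) = inv (word_eval w)"
proof (induction w)
  case (Cons x w)
  obtain i e where x: "x = (i, e)" by force
  with Cons.prems have "i < k" "valid_word w" by auto
  moreover have "inv_word (x # w) = inv_word w @ [(i, - e)]"
    by (simp add: inv_word_def x)
  ultimately show ?case
    using Cons.IH
    by (simp add: x word_eval_append[OF valid_inv_word] gen_closed int_pow_neg inv_mult_group)
qed (simp add: inv_word_def)

lemma reduced_Cons:
  "reduced ((i, e) # w) \<longleftrightarrow>
     i < k \<and> gen i [^] e \<noteq> \<one> \<and> reduced w \<and> (w = [] \<or> fst (hd w) \<noteq> i)"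
  by (cases w) (auto simp: reduced_def)

lemma reduced_append:
  "reduced (u @ v) \<longleftrightarrow>
     reduced u \<and> reduced v \<and> (u = [] \<or> v = [] \<or> fst (last u) \<noteq> fst (hd v))"
  by (auto simp: reduced_def successively_append_iff)

lemma reduced_inv_word: "reduced w \<Longrightarrow> reduced (inv_word w)"
proof -
  assume w: "reduced w"
  then have "successively (\<lambda>a b. fst b \<noteq> fst a) w"
    by (auto simp: reduced_def elim: successively_mono)
  then have "successively (\<lambda>a b. fst a \<noteq> fst b) (inv_word w)"
    by (simp add: inv_word_def successively_map case_prod_beta)
  with w show ?thesis
    by (auto simp: reduced_def inv_word_def int_pow_neg gen_closed)
qed

lemma inv_word_eq_Nil_iff [simp]: "inv_word w = [] \<longleftrightarrow> w = []"
  by (simp add: inv_word_def)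

lemma fst_last_inv_word: "w \<noteq> [] \<Longrightarrow> fst (last (inv_word w)) = fst (hd w)"
  by (cases w) (auto simp: inv_word_def case_prod_beta)

definition cons_nontrivial :: "nat \<Rightarrow> int \<Rightarrow> (nat \<times> int) list \<Rightarrow> (nat \<times> int) list" where
  "cons_nontrivial j e w = (if gen j [^] e = \<one> then w else (j, e) # w)"

fun cons_syllable :: "nat \<Rightarrow> int \<Rightarrow> (nat \<times> int) list \<Rightarrow> (nat \<times> int) list" where
  "cons_syllable j e [] = cons_nontrivial j e []"
| "cons_syllable j e ((i, d) # w) =
     (if i = j then cons_nontrivial j (e + d) w else cons_nontrivial j e ((i, d) # w))"

lemma reduced_cons_nontrivial:
  assumes "reduced w" "j < k" "w = [] \<or> fst (hd w) \<noteq> j"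
  shows "reduced (cons_nontrivial j e w) \<and>
    word_eval (cons_nontrivial j e w) = gen j [^] e \<otimes> word_eval w"
  using assms by (auto simp: cons_nontrivial_def reduced_Cons reduced_imp_valid_word)

lemma reduced_cons_syllable:
  assumes "reduced w" "j < k"
  shows "reduced (cons_syllable j e w) \<and>
    word_eval (cons_syllable j e w) = gen j [^] e \<otimes> word_eval w"
proof (cases w)
  case (Cons x w')
  obtain i d where x: "x = (i, d)" by force
  with Cons assms have w': "i < k" "reduced w'" "w' = [] \<or> fst (hd w') \<noteq> i"
    by (auto simp: reduced_Cons)
  show ?thesis
  proof (cases "i = j")
    case True
    then have "gen j [^] e \<otimes> word_eval w = gen j [^] (e + d) \<otimes> word_eval w'"
      using Cons x w' by (simp add: int_pow_mult gen_closed reduced_imp_valid_word m_assoc)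
    with True Cons x w' show ?thesis by (simp add: reduced_cons_nontrivial)
  qed (use Cons x assms in \<open>simp add: reduced_cons_nontrivial\<close>)
qed (use assms in \<open>simp add: reduced_cons_nontrivial\<close>)

lemma reduce_word: "valid_word v \<Longrightarrow> \<exists>w. reduced w \<and> word_eval w = word_eval v"
proof (induction v)
  case Nil
  show ?case by (intro exI[of _ "[]"]) (simp add: reduced_def)
next
  case (Cons x v)
  obtain i e where x: "x = (i, e)" by force
  with Cons obtain w where "reduced w" "word_eval w = word_eval v" "i < k" by auto
  with x show ?case using reduced_cons_syllable by fastforce
qed

lemma generate_imp_word_eval:
  "g \<in> generate G (gen ` {..<k}) \<Longrightarrow> \<exists>v. valid_word v \<and> word_eval v = g"
proof (induction rule: generate.induct)
  case one
  show ?case by (intro exI[of _ "[]"]) simp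
next
  case (incl h)
  then obtain j where "j < k" "h = gen j" by auto
  then show ?case by (intro exI[of _ "[(j, 1)]"]) (simp add: gen_closed)
next
  case (inv h)
  then obtain j where "j < k" "h = gen j" by auto
  then show ?case by (intro exI[of _ "[(j, -1)]"]) (simp add: gen_closed int_pow_neg)
next
  case (eng h1 h2)
  then obtain v1 v2 where "valid_word v1" "word_eval v1 = h1" "valid_word v2" "word_eval v2 = h2"
    by blast
  then show ?case by (intro exI[of _ "v1 @ v2"]) (auto simp: valid_word_def word_eval_append)
qed

lemma exists_reduced_word: "g \<in> carrier G \<Longrightarrow> \<exists>w. reduced w \<and> word_eval w = g"
  using generate_imp_word_eval reduce_word generate_gens by blast

lemma reduced_word_eval_neq:
  assumes "reduced u" "reduced v" "u \<noteq> [] \<or> v \<noteq> []" "u = [] \<or> v = [] \<or> fst (hd u) \<noteq> fst (hd v)"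
  shows "word_eval u \<noteq> word_eval v"
proof
  assume eq: "word_eval u = word_eval v"
  have "reduced (inv_word u @ v)"
    using assms by (auto simp: reduced_append reduced_inv_word fst_last_inv_word)
  moreover have "inv_word u @ v \<noteq> []"
    using assms(3) by simp
  moreover have "word_eval (inv_word u @ v) = \<one>"
    using assms(1,2) eq
    by (simp add: word_eval_append valid_inv_word word_eval_inv_word reduced_imp_valid_word)
  ultimately show False using reduced_word_eval_neq_one by blast
qed

lemma reduced_word_eval_neq_Cons:
  assumes "reduced ((i, e) # u)" "reduced ((j, d) # v)" "i \<noteq> j \<or> gen i [^] e \<noteq> gen j [^] d"
  shows "word_eval ((i, e) # u) \<noteq> word_eval ((j, d) # v)"
proof (cases "i = j")
  case True
  have u: "i < k" "reduced u" "u = [] \<or> fst (hd u) \<noteq> i" and v: "reduced v" "v = [] \<or> fst (hd v) \<noteq> i"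
    using assms True by (auto simp: reduced_Cons)
  have split: "gen i [^] e = gen i [^] d \<otimes> gen i [^] (e - d)"
    using u(1) int_pow_mult[of "gen i" d "e - d"] by (simp add: gen_closed)
  with assms(3) True u(1) have "gen i [^] (e - d) \<noteq> \<one>"
    by (auto simp: gen_closed)
  with u v have "word_eval ((i, e - d) # u) \<noteq> word_eval v"
    by (intro reduced_word_eval_neq) (auto simp: reduced_Cons)
  with split True u v show ?thesis
    by (auto simp: m_assoc gen_closed reduced_imp_valid_word)
next
  case False
  with assms show ?thesis by (intro reduced_word_eval_neq) auto
qed

lemma reduced_word_unique:
  "reduced u \<Longrightarrow> reduced v \<Longrightarrow> word_eval u = word_eval v \<Longrightarrow> syllables u = syllables v"
proof (induction u arbitrary: v)
  case Nil
  then show ?case using reduced_word_eval_neq[of "[]" v] by (auto simp: syllables_def)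
next
  case (Cons x u)
  obtain i e where x: "x = (i, e)" by force
  show ?case
  proof (cases v)
    case Nil
    then show ?thesis using Cons.prems reduced_word_eval_neq[of "x # u" "[]"] by auto
  next
    case (Cons y v')
    obtain j d where y: "y = (j, d)" by force
    with Cons x \<open>reduced (x # u)\<close> \<open>reduced v\<close> \<open>word_eval (x # u) = word_eval v\<close>
    have "i = j" "gen i [^] e = gen j [^] d"
      using reduced_word_eval_neq_Cons by blast+
    with Cons.prems Cons.IH x y Cons show ?thesis
      by (auto simp: syllables_def reduced_Cons gen_closed reduced_imp_valid_word)
  qed
qed

definition normal_form :: "'a \<Rightarrow> (nat \<times> int) list" where
  "normal_form g = (SOME w. reduced w \<and> word_eval w = g)"

lemma normal_form: "g \<in> carrier G \<Longrightarrow> reduced (normal_form g) \<and> word_eval (normal_form g) = g"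
  unfolding normal_form_def using exists_reduced_word by (rule someI_ex)

end

(* word_colour w is the colour f(g) of the element g represented by w, computed from the right
   starting from f(1) = A1: a syllable (0, e) moves the colour e steps along A1, A2, A3, and an
   odd power of a sigma_i sends A1 to A2 (an arbitrary choice of a colour other than A1) and
   every other colour to A1. *)
definition toggle_A1 :: "colour \<Rightarrow> colour" where
  "toggle_A1 c = (if c = A1 then A2 else A1)"

definition syllable_colour :: "nat \<Rightarrow> int \<Rightarrow> colour \<Rightarrow> colour" where
  "syllable_colour i e =
     (if i = 0 then nxt ^^ nat (e mod 3) else if even e then id else toggle_A1)"

fun word_colour :: "(nat \<times> int) list \<Rightarrow> colour" where
  "word_colour [] = A1"
| "word_colour ((i, e) # w) = syllable_colour i e (word_colour w)"

lemma syllable_colour_0_succ: "syllable_colour 0 (1 + d) c = nxt (syllable_colour 0 d c)"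
proof -
  have "d mod 3 = 0 \<and> (1 + d) mod 3 = 1 \<or> d mod 3 = 1 \<and> (1 + d) mod 3 = 2
      \<or> d mod 3 = 2 \<and> (1 + d) mod 3 = 0"
    by presburger
  then show ?thesis
    by (elim disjE conjE) (cases c; simp add: syllable_colour_def numeral_2_eq_2)+
qed

lemma syllable_colour_1: "syllable_colour i 1 = (if i = 0 then nxt else toggle_A1)"
  by (simp add: syllable_colour_def)

lemma syllable_colour_succ_eq_A1:
  "i \<noteq> 0 \<Longrightarrow> syllable_colour i (1 + d) c = A1 \<longleftrightarrow> syllable_colour i d c \<noteq> A1"
  by (auto simp: syllable_colour_def toggle_A1_def)

locale free_product_colouring = cyclic_free_product +
  assumes ord_gen_0: "ord (gen 0) = 0 \<or> 3 dvd ord (gen 0)"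
    and ord_gen: "\<And>i. 0 < i \<Longrightarrow> i < k \<Longrightarrow> ord (gen i) = 0 \<or> 2 dvd ord (gen i)"
    and k_pos: "0 < k"
begin

lemma gen_pow_eq_one_dvd:
  fixes x :: int
  assumes "i < k" "gen i [^] x = \<one>"
  shows "(if i = 0 then 3 else 2) dvd x"
proof -
  have d: "int (ord (gen i)) dvd x"
    using assms int_pow_eq_id gen_closed by blast
  show ?thesis
  proof (cases "ord (gen i) = 0")
    case False
    then have "(if i = 0 then 3 else 2) dvd ord (gen i)"
      using ord_gen_0 ord_gen[of i] assms(1) by (cases "i = 0") auto
    then have "int (if i = 0 then 3 else 2) dvd x"
      using d by (meson dvd_trans int_dvd_int_iff)
    then show ?thesis by (cases "i = 0") simp_all
  qed (use d in simp)
qed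

lemma syllable_colour_cong:
  assumes "i < k" "gen i [^] e = gen i [^] d"
  shows "syllable_colour i e = syllable_colour i d"
proof -
  have "gen i [^] (e - d) = \<one>"
    using assms by (simp add: int_pow_diff gen_closed)
  then have "(if i = 0 then 3 else 2) dvd e - d"
    using assms(1) gen_pow_eq_one_dvd by blast
  then show ?thesis
  proof (cases "i = 0")
    case True
    with \<open>(if i = 0 then 3 else 2) dvd e - d\<close> have "e mod 3 = d mod 3"
      by (simp add: mod_eq_dvd_iff)
    with True show ?thesis by (simp add: syllable_colour_def)
  next
    case False
    with \<open>(if i = 0 then 3 else 2) dvd e - d\<close> have "even e \<longleftrightarrow> even d"
      by simp
    with False show ?thesis by (simp add: syllable_colour_def)
  qed
qed

lemma word_colour_syllables:
  "valid_word u \<Longrightarrow> syllables u = syllables v \<Longrightarrow> word_colour u = word_colour v"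
proof (induction u arbitrary: v)
  case (Cons x u)
  obtain i e where x: "x = (i, e)" by force
  with Cons.prems obtain d v' where v: "v = (i, d) # v'" "syllables u = syllables v'"
    and same: "i < k" "gen i [^] e = gen i [^] d" and "valid_word u"
    by (cases v) (auto simp: syllables_def)
  from same have "syllable_colour i e = syllable_colour i d"
    by (rule syllable_colour_cong)
  with x v Cons.IH \<open>valid_word u\<close> show ?case by simp
qed (simp add: syllables_def)

lemma word_colour_cons_nontrivial:
  assumes "j < k"
  shows "word_colour (cons_nontrivial j e w) = syllable_colour j e (word_colour w)"
proof (cases "gen j [^] e = \<one>")
  case True
  with assms have "syllable_colour j e = syllable_colour j 0"
    by (intro syllable_colour_cong) (simp_all add: gen_closed)
  moreover have "syllable_colour j 0 = id"
    by (simp add: syllable_colour_def)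
  ultimately show ?thesis using True by (simp add: cons_nontrivial_def)
qed (simp add: cons_nontrivial_def)

definition group_colour :: "'a \<Rightarrow> colour" where
  "group_colour g = word_colour (normal_form g)"

lemma group_colour_word_eval:
  assumes "reduced w"
  shows "group_colour (word_eval w) = word_colour w"
proof -
  have "reduced (normal_form (word_eval w)) \<and> word_eval (normal_form (word_eval w)) = word_eval w"
    using assms by (simp add: normal_form reduced_imp_valid_word)
  then have "syllables (normal_form (word_eval w)) = syllables w"
    using assms reduced_word_unique by blast
  then show ?thesis
    unfolding group_colour_def
    using \<open>reduced (normal_form (word_eval w)) \<and> _\<close>
    by (simp add: word_colour_syllables reduced_imp_valid_word)
qed

lemma group_colour_gen_mult:
  assumes "g \<in> carrier G" "j < k"
  shows "group_colour (gen j \<otimes> g) = word_colour (cons_syllable j 1 (normal_form g))"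
proof -
  have "reduced (cons_syllable j 1 (normal_form g))"
    and "word_eval (cons_syllable j 1 (normal_form g)) = gen j \<otimes> g"
    using reduced_cons_syllable[of "normal_form g" j 1] normal_form[OF assms(1)] assms(2)
    by (simp_all add: gen_closed)
  then show ?thesis by (metis group_colour_word_eval)
qed

lemma group_colour_gen_0_mult:
  assumes "g \<in> carrier G"
  shows "group_colour (gen 0 \<otimes> g) = nxt (group_colour g)"
proof -
  have "word_colour (cons_syllable 0 1 w) = nxt (word_colour w)" for w
    using k_pos
    by (cases "(0::nat, 1::int, w)" rule: cons_syllable.cases)
      (auto simp: word_colour_cons_nontrivial syllable_colour_0_succ syllable_colour_1)
  then show ?thesis
    using group_colour_gen_mult[OF assms k_pos] unfolding group_colour_def by simp
qed

lemma group_colour_inv_gen_0_mult: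
  assumes "g \<in> carrier G"
  shows "group_colour (inv (gen 0) \<otimes> g) = prv (group_colour g)"
proof -
  have "group_colour g = group_colour (gen 0 \<otimes> (inv (gen 0) \<otimes> g))"
    using assms k_pos gen_closed by (simp add: m_assoc[symmetric])
  also have "\<dots> = nxt (group_colour (inv (gen 0) \<otimes> g))"
    using assms k_pos gen_closed by (simp add: group_colour_gen_0_mult)
  finally show ?thesis by simp
qed

lemma group_colour_gen_mult_eq_A1:
  assumes "g \<in> carrier G" "0 < j" "j < k"
  shows "group_colour (gen j \<otimes> g) = A1 \<longleftrightarrow> group_colour g \<noteq> A1"
proof -
  have "word_colour (cons_syllable j 1 w) = A1 \<longleftrightarrow> word_colour w \<noteq> A1" for w
    using assms
    by (cases "(j, 1::int, w)" rule: cons_syllable.cases)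
      (auto simp: word_colour_cons_nontrivial syllable_colour_succ_eq_A1 syllable_colour_1 toggle_A1_def)
  then show ?thesis
    using group_colour_gen_mult[OF assms(1,3)] unfolding group_colour_def by simp
qed

end

(* h x is the element carrying a chosen representative of the orbit of x to x. *)
lemma (in group_action) free_orbit_coordinates:
  obtains h where "\<And>x. x \<in> E \<Longrightarrow> h x \<in> carrier G"
    and "\<And>x g. x \<in> E \<Longrightarrow> \<forall>a\<in>carrier G. \<phi> a x = x \<longrightarrow> a = \<one> \<Longrightarrow> g \<in> carrier G
           \<Longrightarrow> h (\<phi> g x) = g \<otimes> h x"
proof -
  interpret group G
    using group_hom group_hom.axioms(1) by blast
  have act_closed: "\<phi> a x \<in> E" if "a \<in> carrier G" "x \<in> E" for a x
    using element_image that by blast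
  have act_inv: "\<phi> (inv a) (\<phi> a x) = x" if "a \<in> carrier G" "x \<in> E" for a x
    using orbit_sym_aux that by blast
  define r where "r x = (SOME y. y \<in> orbit G \<phi> x)" for x
  define h where "h x = (SOME a. a \<in> carrier G \<and> \<phi> a (r x) = x)" for x
  have r: "r x \<in> E \<and> (\<exists>a\<in>carrier G. \<phi> a (r x) = x)" if "x \<in> E" for x
  proof -
    have "r x \<in> orbit G \<phi> x"
      unfolding r_def using orbit_refl[OF that] by (rule someI)
    then obtain b where "b \<in> carrier G" "r x = \<phi> b x"
      by (auto simp: orbit_def)
    with that act_closed act_inv show ?thesis by (metis inv_closed)
  qed
  have h: "h x \<in> carrier G \<and> \<phi> (h x) (r x) = x" if "x \<in> E" for x
    unfolding h_def using r[OF that] by (metis (mono_tags, lifting) someI_ex)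
  have r_translate: "r (\<phi> g x) = r x" if "x \<in> E" "g \<in> carrier G" for x g
  proof -
    have "\<phi> a (\<phi> g x) = \<phi> (a \<otimes> g) x" "\<phi> a x = \<phi> (a \<otimes> inv g) (\<phi> g x)"
      if "a \<in> carrier G" for a
      using that \<open>x \<in> E\<close> \<open>g \<in> carrier G\<close> by (simp_all add: composition_rule act_closed act_inv)
    then have "orbit G \<phi> (\<phi> g x) = orbit G \<phi> x"
      unfolding orbit_def using \<open>g \<in> carrier G\<close> by (metis (no_types, opaque_lifting) m_closed inv_closed)
    then show ?thesis by (simp add: r_def)
  qed
  have free_cancel: "a = b"
    if "x \<in> E" "\<forall>a\<in>carrier G. \<phi> a x = x \<longrightarrow> a = \<one>" "a \<in> carrier G" "b \<in> carrier G"
      "\<phi> a x = \<phi> b x"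
    for x a b
  proof -
    have "\<phi> (inv b \<otimes> a) x = x"
      using that by (simp add: composition_rule act_inv)
    with that have "inv b \<otimes> a = \<one>"
      by simp
    with that show ?thesis
      by (metis inv_closed inv_equality inv_inv)
  qed
  show thesis
  proof (rule that)
    show "h x \<in> carrier G" if "x \<in> E" for x
      using h[OF that] by blast
  next
    fix x g
    assume x: "x \<in> E" "\<forall>a\<in>carrier G. \<phi> a x = x \<longrightarrow> a = \<one>" and g: "g \<in> carrier G"
    let ?y = "\<phi> g x"
    have y: "?y \<in> E" "r ?y = r x"
      using x g act_closed r_translate by auto
    have rx: "r x = \<phi> (inv (h x)) x"
      using h[OF x(1)] r[OF x(1)] act_inv by metis
    have "\<phi> (h ?y \<otimes> inv (h x)) x = \<phi> ((g \<otimes> h x) \<otimes> inv (h x)) x"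
      using h[OF x(1)] h[OF y(1)] x g y rx
      by (simp add: composition_rule act_closed)
    then have "h ?y \<otimes> inv (h x) = (g \<otimes> h x) \<otimes> inv (h x)"
      using h[OF x(1)] h[OF y(1)] x g by (intro free_cancel[OF x]) auto
    then show "h ?y = g \<otimes> h x"
      using h[OF x(1)] h[OF y(1)] g by simp
  qed
qed

lemma rule_at_colour_neq_prev:
  assumes "rule_at G \<phi> tau sg k c x"
  shows "c x \<noteq> c (\<phi> (inv\<^bsub>G\<^esub> tau) x)"
proof -
  obtain s where s: "card {i \<in> {1..<k}. c (\<phi> (sg i) x) = A1} = s"
    by blast
  from assms show ?thesis
    unfolding rule_at_def Let_def s
    by (cases "c (\<phi> tau x)"; cases "c (\<phi> (inv\<^bsub>G\<^esub> tau) x)") (auto split: if_splits)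
qed

lemma rule_at_colour_eq_nxt_prev:
  assumes "rule_at G \<phi> tau sg k c x" "c (\<phi> tau x) \<noteq> c x"
  shows "c x = nxt (c (\<phi> (inv\<^bsub>G\<^esub> tau) x))"
proof -
  obtain s where s: "card {i \<in> {1..<k}. c (\<phi> (sg i) x) = A1} = s"
    by blast
  from assms show ?thesis
    unfolding rule_at_def Let_def s
    by (cases "c (\<phi> tau x)"; cases "c (\<phi> (inv\<^bsub>G\<^esub> tau) x)") (auto split: if_splits)
qed

lemma rule_at_along_tau:
  assumes "rule_at G \<phi> tau sg k c x" "rule_at G \<phi> tau sg k c (\<phi> tau x)"
    "rule_at G \<phi> tau sg k c (\<phi> tau (\<phi> tau x))"
    "\<phi> (inv\<^bsub>G\<^esub> tau) (\<phi> tau x) = x" "\<phi> (inv\<^bsub>G\<^esub> tau) (\<phi> tau (\<phi> tau x)) = \<phi> tau x"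
  shows "c (\<phi> (inv\<^bsub>G\<^esub> tau) x) = prv (c x)" and "c (\<phi> tau x) = nxt (c x)"
proof -
  have "c (\<phi> tau x) \<noteq> c x"
    using rule_at_colour_neq_prev[OF assms(2)] assms(4) by simp
  then show "c (\<phi> (inv\<^bsub>G\<^esub> tau) x) = prv (c x)"
    using rule_at_colour_eq_nxt_prev[OF assms(1)] by simp
  have "c (\<phi> tau (\<phi> tau x)) \<noteq> c (\<phi> tau x)"
    using rule_at_colour_neq_prev[OF assms(3)] assms(5) by simp
  then show "c (\<phi> tau x) = nxt (c x)"
    using rule_at_colour_eq_nxt_prev[OF assms(2)] assms(4) by simp
qed

lemma rule_at_iff_count:
  fixes sg :: "nat \<Rightarrow> 'g" and k :: nat
  assumes "c (\<phi> (inv\<^bsub>G\<^esub> tau) x) = prv (c x)" "c (\<phi> tau x) = nxt (c x)"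
  defines "n \<equiv> (if c x = A1 then 0 else 1) + card {i \<in> {1..<k}. c (\<phi> (sg i) x) = A1}"
  shows "rule_at G \<phi> tau sg k c x \<longleftrightarrow> \<not> (0 < n \<and> n < k)"
proof -
  obtain s where s: "card {i \<in> {1..<k}. c (\<phi> (sg i) x) = A1} = s"
    by blast
  show ?thesis
    unfolding rule_at_def Let_def assms(1,2) n_def s by (cases "c x") simp_all
qed

lemma rule_at_sg_1:
  assumes "rule_at G \<phi> tau sg k c x" "c (\<phi> (inv\<^bsub>G\<^esub> tau) x) = prv (c x)"
    "c (\<phi> tau x) = nxt (c x)" "c x \<noteq> A1" "1 < k"
  shows "c (\<phi> (sg 1) x) = A1"
proof -
  let ?S = "{i \<in> {1..<k}. c (\<phi> (sg i) x) = A1}"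
  have "card {1..<k} \<le> card ?S"
    using assms(1,4) rule_at_iff_count[of c \<phi> G tau x sg k, OF assms(2,3)] by auto
  then have "?S = {1..<k}"
    by (intro card_seteq) auto
  moreover have "1 \<in> {1..<k}"
    using assms(5) by simp
  ultimately show ?thesis by blast
qed

lemma rule_at_of_colour_shifts:
  assumes "c (\<phi> (inv\<^bsub>G\<^esub> tau) x) = prv (c x)" "c (\<phi> tau x) = nxt (c x)"
    and "\<And>i. i \<in> {1..<k} \<Longrightarrow> c (\<phi> (sg i) x) = A1 \<longleftrightarrow> c x \<noteq> A1" and "0 < k"
  shows "rule_at G \<phi> tau sg k c x"
proof -
  have "{i \<in> {1..<k}. c (\<phi> (sg i) x) = A1} = (if c x = A1 then {} else {1..<k})"
    using assms(3) by auto
  with assms(4) show ?thesis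
    unfolding rule_at_iff_count[of c \<phi> G tau x sg k, OF assms(1,2)] by (cases "c x = A1") simp_all
qed

lemma AE_measure_preserving_comp:
  assumes "T \<in> measurable M M" "\<forall>A\<in>sets M. emeasure M (T -` A \<inter> space M) = emeasure M A"
    and "AE x in M. P x"
  shows "AE x in M. P (T x)"
proof -
  obtain N where N: "{x \<in> space M. \<not> P x} \<subseteq> N" "emeasure M N = 0" "N \<in> sets M"
    using assms(3) by (rule AE_E)
  show ?thesis
  proof (rule AE_I)
    show "{x \<in> space M. \<not> P (T x)} \<subseteq> T -` N \<inter> space M"
      using N(1) measurable_space[OF assms(1)] by auto
    show "emeasure M (T -` N \<inter> space M) = 0"
      using assms(2) N by simp
    show "T -` N \<inter> space M \<in> sets M"
      using assms(1) N(3) by (rule measurable_sets)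
  qed
qed

lemma (in ring_of_sets) additive_Diff_null:
  fixes \<mu> :: "'a set \<Rightarrow> ennreal"
  assumes "positive M \<mu>" "additive M \<mu>" "A \<in> M" "N \<in> M" "\<mu> N = 0"
  shows "\<mu> (A - N) = \<mu> A"
proof (rule antisym)
  have inc: "increasing M \<mu>"
    using assms(1,2) by (rule additive_increasing)
  then show "\<mu> (A - N) \<le> \<mu> A"
    using assms(3,4) by (auto intro: increasingD)
  have "\<mu> A \<le> \<mu> ((A - N) \<union> N)"
    using assms(3,4) by (auto intro: increasingD[OF inc])
  also have "\<dots> = \<mu> (A - N)"
    using additiveD[OF assms(2), of "A - N" N] assms by auto
  finally show "\<mu> A \<le> \<mu> (A - N)" .
qed

lemma invariant_extension_le_translate:
  assumes ext: "invariant_extension m G \<phi> B \<mu>" and "g \<in> carrier G" "A \<in> B" "C \<in> B"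
    and "N \<in> sets m" "emeasure m N = 0" "\<phi> g ` (A - N) \<subseteq> C"
  shows "\<mu> A \<le> \<mu> C"
proof -
  from ext assms(5,6) have alg: "Sigma_Algebra.algebra (space m) B"
    and "N \<in> B" "positive B \<mu>" "additive B \<mu>" "\<mu> N = 0"
    and inv: "\<forall>g\<in>carrier G. \<forall>A\<in>B. \<phi> g ` A \<in> B \<and> \<mu> (\<phi> g ` A) = \<mu> A"
    unfolding invariant_extension_def by auto
  interpret Sigma_Algebra.algebra "space m" B by (rule alg)
  have "A - N \<in> B" using \<open>A \<in> B\<close> \<open>N \<in> B\<close> by blast
  have "\<mu> A = \<mu> (A - N)"
    using additive_Diff_null[OF \<open>positive B \<mu>\<close> \<open>additive B \<mu>\<close> \<open>A \<in> B\<close> \<open>N \<in> B\<close> \<open>\<mu> N = 0\<close>]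
    by simp
  also have "\<dots> = \<mu> (\<phi> g ` (A - N))"
    using inv \<open>g \<in> carrier G\<close> \<open>A - N \<in> B\<close> by simp
  also have "\<dots> \<le> \<mu> C"
    using additive_increasing[OF \<open>positive B \<mu>\<close> \<open>additive B \<mu>\<close>] assms(7)
    by (rule increasingD) (use inv assms(2,4) \<open>A - N \<in> B\<close> in auto)
  finally show ?thesis .
qed

lemma ennreal_double_le_contra: "(p::ennreal) + p \<le> p \<Longrightarrow> p + (p + p) = 1 \<Longrightarrow> False"
  by (cases p) (auto simp: ennreal_plus[symmetric] simp del: ennreal_plus)

lemma colour_classes_contra:
  fixes \<mu> :: "'x set \<Rightarrow> ennreal" and c :: "'x \<Rightarrow> colour"
  assumes "Sigma_Algebra.algebra \<Omega> B" "positive B \<mu>" "additive B \<mu>" "\<mu> \<Omega> = 1"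
    and classes: "\<And>j. c -` {j} \<inter> \<Omega> \<in> B"
    and shift: "\<And>j. \<mu> (c -` {j} \<inter> \<Omega>) \<le> \<mu> (c -` {prv j} \<inter> \<Omega>)"
    and flip: "\<mu> (c -` {A2, A3} \<inter> \<Omega>) \<le> \<mu> (c -` {A1} \<inter> \<Omega>)"
  shows False
proof -
  interpret Sigma_Algebra.algebra \<Omega> B by fact
  define p where "p j = \<mu> (c -` {j} \<inter> \<Omega>)" for j
  have "p A1 \<le> p A3" "p A3 \<le> p A2" "p A2 \<le> p A1"
    using shift[of A1] shift[of A3] shift[of A2] by (simp_all add: p_def)
  then have eq: "p A2 = p A1" "p A3 = p A1"
    by (metis antisym order_trans)+
  have split23: "c -` {A2, A3} \<inter> \<Omega> = (c -` {A2} \<inter> \<Omega>) \<union> (c -` {A3} \<inter> \<Omega>)"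
    by auto
  have "\<mu> (c -` {A2, A3} \<inter> \<Omega>) = p A2 + p A3"
    unfolding split23 p_def by (rule additiveD[OF assms(3)]) (auto simp: classes)
  with eq have p23: "\<mu> (c -` {A2, A3} \<inter> \<Omega>) = p A1 + p A1"
    by simp
  have "\<mu> ((c -` {A1} \<inter> \<Omega>) \<union> (c -` {A2, A3} \<inter> \<Omega>)) = p A1 + \<mu> (c -` {A2, A3} \<inter> \<Omega>)"
    unfolding p_def by (rule additiveD[OF assms(3)]) (auto simp: classes split23)
  moreover have "(c -` {A1} \<inter> \<Omega>) \<union> (c -` {A2, A3} \<inter> \<Omega>) = \<Omega>"
    using colour.exhaust by auto
  ultimately have "1 = p A1 + \<mu> (c -` {A2, A3} \<inter> \<Omega>)"
    using assms(4) by simp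
  with p23 have "p A1 + (p A1 + p A1) = 1"
    by simp
  moreover have "p A1 + p A1 \<le> p A1"
    using flip p23 by (simp add: p_def)
  ultimately show False by (rule ennreal_double_le_contra[rotated])
qed

lemma (in free_product_colouring) exists_rule_colouring:
  assumes act: "group_action G (space m) \<phi>"
    and free: "AE x in m. \<forall>g\<in>carrier G. \<phi> g x = x \<longrightarrow> g = \<one>"
    and tau: "gen 0 = tau" and sg: "\<And>i. i \<in> {1..<k} \<Longrightarrow> gen i = sg i"
  shows "\<exists>c. satisfies_rule m G \<phi> tau sg k c"
proof -
  obtain h where h_closed: "\<And>x. x \<in> space m \<Longrightarrow> h x \<in> carrier G"
    and h_mult: "\<And>x g. x \<in> space m \<Longrightarrow> \<forall>a\<in>carrier G. \<phi> a x = x \<longrightarrow> a = \<one>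
                   \<Longrightarrow> g \<in> carrier G \<Longrightarrow> h (\<phi> g x) = g \<otimes> h x"
    using group_action.free_orbit_coordinates[OF act] by blast
  let ?c = "\<lambda>x. group_colour (h x)"
  have rule_free: "rule_at G \<phi> tau sg k ?c x"
    if x: "x \<in> space m" "\<forall>a\<in>carrier G. \<phi> a x = x \<longrightarrow> a = \<one>" for x
  proof (rule rule_at_of_colour_shifts)
    show "?c (\<phi> (inv tau) x) = prv (?c x)"
      using h_mult[OF x] h_closed[OF x(1)] tau k_pos gen_closed
      by (auto simp: group_colour_inv_gen_0_mult)
    show "?c (\<phi> tau x) = nxt (?c x)"
      using h_mult[OF x] h_closed[OF x(1)] tau k_pos gen_closed
      by (auto simp: group_colour_gen_0_mult)
    show "?c (\<phi> (sg i) x) = A1 \<longleftrightarrow> ?c x \<noteq> A1" if "i \<in> {1..<k}" for i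
    proof -
      have "h (\<phi> (sg i) x) = gen i \<otimes> h x"
        using h_mult[OF x] sg[OF that] that gen_closed by force
      then show ?thesis
        using group_colour_gen_mult_eq_A1[of "h x" i] h_closed[OF x(1)] that by simp
    qed
  qed (rule k_pos)
  have "satisfies_rule m G \<phi> tau sg k ?c"
    unfolding satisfies_rule_def using free by (rule AE_mp) (auto intro!: AE_I2 rule_free)
  then show ?thesis by blast
qed

lemma satisfies_rule_AE_colour_shifts:
  assumes "group G" and act: "group_action G (space m) \<phi>" and tau: "tau \<in> carrier G"
    and "1 < k"
    and pres: "\<phi> tau \<in> measurable m m" "\<forall>A\<in>sets m. emeasure m (\<phi> tau -` A \<inter> space m) = emeasure m A"
    and rule: "satisfies_rule m G \<phi> tau sg k c"
  obtains N where "N \<in> sets m" "emeasure m N = 0"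
    and "\<And>x. x \<in> space m - N \<Longrightarrow> c (\<phi> (inv\<^bsub>G\<^esub> tau) x) = prv (c x)"
    and "\<And>x. x \<in> space m - N \<Longrightarrow> c x \<noteq> A1 \<Longrightarrow> c (\<phi> (sg 1) x) = A1"
proof -
  interpret group_action G "space m" \<phi> by (rule act)
  let ?R = "rule_at G \<phi> tau sg k c"
  have R0: "AE x in m. ?R x"
    using rule unfolding satisfies_rule_def .
  have R1: "AE x in m. ?R (\<phi> tau x)"
    using AE_measure_preserving_comp[OF pres R0] .
  have R2: "AE x in m. ?R (\<phi> tau (\<phi> tau x))"
    using AE_measure_preserving_comp[OF pres R1] .
  from R0 R1 R2 have "AE x in m. ?R x \<and> ?R (\<phi> tau x) \<and> ?R (\<phi> tau (\<phi> tau x))"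
    by (intro AE_conjI)
  then obtain N where "{x \<in> space m. \<not> (?R x \<and> ?R (\<phi> tau x) \<and> ?R (\<phi> tau (\<phi> tau x)))} \<subseteq> N"
    and N: "emeasure m N = 0" "N \<in> sets m"
    by (rule AE_E)
  then have good: "?R x" "?R (\<phi> tau x)" "?R (\<phi> tau (\<phi> tau x))" if "x \<in> space m - N" for x
    using that by blast+
  have act_inv: "\<phi> (inv\<^bsub>G\<^esub> tau) (\<phi> tau y) = y" and tau_space: "\<phi> tau y \<in> space m"
    if "y \<in> space m" for y
    using orbit_sym_aux element_image tau that by blast+
  have colour_prev: "c (\<phi> (inv\<^bsub>G\<^esub> tau) x) = prv (c x)"
    and colour_next: "c (\<phi> tau x) = nxt (c x)" if "x \<in> space m - N" for x
    using rule_at_along_tau[OF good[OF that] act_inv act_inv[OF tau_space]] that by auto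
  show thesis
  proof (rule that[OF N(2,1) colour_prev])
    show "c (\<phi> (sg 1) x) = A1" if "x \<in> space m - N" "c x \<noteq> A1" for x
      using good[OF that(1)] colour_prev[OF that(1)] colour_next[OF that(1)] that(2) \<open>1 < k\<close>
      by (intro rule_at_sg_1) auto
  qed
qed

lemma no_measurable_rule_colouring:
  assumes "group G" and act: "group_action G (space m) \<phi>"
    and tau: "tau \<in> carrier G" and sg: "sg 1 \<in> carrier G" and "1 < k"
    and pres: "\<phi> tau \<in> measurable m m" "\<forall>A\<in>sets m. emeasure m (\<phi> tau -` A \<inter> space m) = emeasure m A"
    and ext: "invariant_extension m G \<phi> B \<mu>"
    and rule: "satisfies_rule m G \<phi> tau sg k c" and classes: "\<And>j. c -` {j} \<inter> space m \<in> B"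
  shows False
proof -
  interpret group G by fact
  interpret group_action G "space m" \<phi> by (rule act)
  interpret B: Sigma_Algebra.algebra "space m" B
    using ext unfolding invariant_extension_def by blast
  obtain N where N: "N \<in> sets m" "emeasure m N = 0"
    and colour_prev: "\<And>x. x \<in> space m - N \<Longrightarrow> c (\<phi> (inv\<^bsub>G\<^esub> tau) x) = prv (c x)"
    and sg_A1: "\<And>x. x \<in> space m - N \<Longrightarrow> c x \<noteq> A1 \<Longrightarrow> c (\<phi> (sg 1) x) = A1"
    using satisfies_rule_AE_colour_shifts[OF assms(1-3,5) pres rule] by blast
  have shift: "\<mu> (c -` {j} \<inter> space m) \<le> \<mu> (c -` {prv j} \<inter> space m)" for j
    by (rule invariant_extension_le_translate[OF ext inv_closed[OF tau] classes classes N])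
      (use colour_prev element_image[OF inv_closed[OF tau]] in auto)
  have flip: "\<mu> (c -` {A2, A3} \<inter> space m) \<le> \<mu> (c -` {A1} \<inter> space m)"
  proof (rule invariant_extension_le_translate[OF ext sg _ classes N])
    have "c -` {A2, A3} \<inter> space m = (c -` {A2} \<inter> space m) \<union> (c -` {A3} \<inter> space m)"
      by auto
    then show "c -` {A2, A3} \<inter> space m \<in> B"
      using B.Un[OF classes classes] by simp
    show "\<phi> (sg 1) ` (c -` {A2, A3} \<inter> space m - N) \<subseteq> c -` {A1} \<inter> space m"
      using sg_A1 element_image[OF sg] by fastforce
  qed
  from ext have "positive B \<mu>" "additive B \<mu>" "\<mu> (space m) = 1"
    unfolding invariant_extension_def by auto
  from colour_classes_contra[OF B.algebra_axioms this classes shift flip]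
  show False .
qed

theorem proposition2:
  fixes G :: "('g, 'b) monoid_scheme"
    and \<phi> :: "'g \<Rightarrow> 'x \<Rightarrow> 'x"
    and m :: "'x measure"
    and tau :: 'g and sg :: "nat \<Rightarrow> 'g" and k :: nat
  assumes "k \<ge> 2"
    and "group G"
    and "tau \<in> carrier G" and "\<forall>i \<in> {1..<k}. sg i \<in> carrier G"
    and "free_product_of_cyclics G (\<lambda>i. if i = 0 then tau else sg i) k"
    and "group.ord G tau = 0 \<or> 3 dvd group.ord G tau"
    and "\<forall>i \<in> {1..<k}. group.ord G (sg i) = 0 \<or> 2 dvd group.ord G (sg i)"
    and "prob_space m"
    and "group_action G (space m) \<phi>"
    and "\<forall>g \<in> carrier G. \<phi> g \<in> measurable m m \<and>
           (\<forall>A \<in> sets m. emeasure m (\<phi> g -` A \<inter> space m) = emeasure m A)"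
    and "AE x in m. \<forall>g \<in> carrier G. \<phi> g x = x \<longrightarrow> g = \<one>\<^bsub>G\<^esub>"
  shows "paradoxical_rule m G \<phi> tau sg k"
proof -
  have "free_product_colouring G (\<lambda>i. if i = 0 then tau else sg i) k"
    unfolding free_product_colouring_def free_product_colouring_axioms_def
      cyclic_free_product_def cyclic_free_product_axioms_def
    using assms by auto
  then interpret free_product_colouring G "\<lambda>i. if i = 0 then tau else sg i" k .
  have "\<exists>c. satisfies_rule m G \<phi> tau sg k c"
    by (rule exists_rule_colouring) (use assms in auto)
  moreover have False
    if "invariant_extension m G \<phi> B \<mu>" "satisfies_rule m G \<phi> tau sg k c"
      "\<forall>j. c -` {j} \<inter> space m \<in> B" for B \<mu> c
    by (rule no_measurable_rule_colouring[of G m \<phi> tau sg k B \<mu> c]) (use assms that in auto)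
  ultimately show ?thesis
    unfolding paradoxical_rule_def by blast
qed

end
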